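(* Let $(\mathcal C_n)_{n\in\mathbb N_0}$ be a sequence of $\sigma$-subfields with $\mathcal C_n\to\mathcal C_0$ strongly as $n\to\infty$. Let $I$ be an arbitrary index set and let $(\mathcal B_n^i)_{(n,i)\in\mathbb N_0\times I}$ be $\sigma$-subfields such that, for each $i\in I$, $\mathcal B_n^i\to\mathcal B_0^i$ weakly as $n\to\infty$, and such that, for each $n\in\mathbb N$, the family $(\mathcal B_n^i)_{i\in I}$ is conditionally independent given $\mathcal C_n$ (under $\mathbb P$). Then the family $(\mathcal B_0^i)_{i\in I}$ is conditionally independent given $\mathcal C_0$.
   Context: Let $(\Omega,\mathcal F,\mathbb P)$ be a (not necessarily complete) probability space and $\mathcal N:=\{F\in\mathcal F:\mathbb P(F)=0\}$. A $\sigma$-subfield is a sub-$\sigma$-field $\mathcal A\subset\mathcal F$ which is $\mathbb P$-complete, i.e. $\mathcal A=\sigma(\mathcal A\cup\mathcal N)$. For a $\sigma$-subfield $\mathcal A$ and integrable $f$, $\mathbb P_{\mathcal A}f:=\mathbb E^{\mathbb P}[f\mid\mathcal A]$. For $\sigma$-subfields $(\mathcal B_n)_{n\in\mathbb N_0}$: $\mathcal B_n\to\mathcal B_0$ weakly if $\mathbb P_{\mathcal B_n}\mathbb 1_A\to\mathbb 1_A$ in $\mathbb P$-probability for every $A\in\mathcal B_0$; $\mathcal B_n\to\mathcal B_0$ strongly if $\mathbb P_{\mathcal B_n}\mathbb 1_A\to\mathbb P_{\mathcal B_0}\mathbb 1_A$ in $\mathbb P$-probability for every $A\in\mathcal F$.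 *)

theory Defs
  imports "HOL-Probability.Probability"
begin

text \<open>A sigma-subfield: a sub-sigma-algebra of sets M that contains all P-null sets
  (equivalently, A = sigma(A \<union> N)).\<close>
definition sigma_subfield :: "'a measure \<Rightarrow> 'a set set \<Rightarrow> bool" where
  "sigma_subfield M A \<longleftrightarrow> sigma_algebra (space M) A \<and> A \<subseteq> sets M \<and> null_sets M \<subseteq> A"

definition cexp :: "'a measure \<Rightarrow> 'a set set \<Rightarrow> ('a \<Rightarrow> real) \<Rightarrow> ('a \<Rightarrow> real)" where
  "cexp M A f = real_cond_exp M (sigma (space M) A) f"

definition conv_in_prob :: "'a measure \<Rightarrow> (nat \<Rightarrow> 'a \<Rightarrow> real) \<Rightarrow> ('a \<Rightarrow> real) \<Rightarrow> bool" where
  "conv_in_prob M X Y \<longleftrightarrow>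
     (\<forall>e>0. (\<lambda>n. measure M {x \<in> space M. e < \<bar>X n x - Y x\<bar>}) \<longlonglongrightarrow> 0)"

definition sf_weak_conv :: "'a measure \<Rightarrow> (nat \<Rightarrow> 'a set set) \<Rightarrow> 'a set set \<Rightarrow> bool" where
  "sf_weak_conv M B B0 \<longleftrightarrow>
     (\<forall>A\<in>B0. conv_in_prob M (\<lambda>n. cexp M (B n) (indicator A)) (indicator A))"

definition sf_strong_conv :: "'a measure \<Rightarrow> (nat \<Rightarrow> 'a set set) \<Rightarrow> 'a set set \<Rightarrow> bool" where
  "sf_strong_conv M B B0 \<longleftrightarrow>
     (\<forall>A\<in>sets M. conv_in_prob M (\<lambda>n. cexp M (B n) (indicator A)) (cexp M B0 (indicator A)))"

definition cond_indep :: "'a measure \<Rightarrow> 'a set set \<Rightarrow> ('i \<Rightarrow> 'a set set) \<Rightarrow> 'i set \<Rightarrow> bool" where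
  "cond_indep M C B I \<longleftrightarrow>
     (\<forall>J A. finite J \<and> J \<noteq> {} \<and> J \<subseteq> I \<and> (\<forall>j\<in>J. A j \<in> B j) \<longrightarrow>
        (AE x in M. cexp M C (indicator (\<Inter>j\<in>J. A j)) x
                    = (\<Prod>j\<in>J. cexp M C (indicator (A j)) x)))"

end

theory Submission
  imports Defs
begin

text \<open>Fix \<open>A\<^sub>j \<in> B\<^sub>0\<^sup>j\<close> for \<open>j\<close> in a finite \<open>J\<close>. By weak convergence the level
  sets \<open>S\<^sub>n\<^sup>j = {E[1\<^bsub>A\<^sub>j\<^esub> | B\<^sub>n\<^sup>j] > 1/2} \<in> B\<^sub>n\<^sup>j\<close> converge to \<open>A\<^sub>j\<close> in \<open>L\<^sup>1\<close>, and
  conditional independence gives the product formula for the sets \<open>S\<^sub>n\<^sup>j\<close> given \<open>C\<^sub>n\<close>.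
  Conditional expectation is an \<open>L\<^sup>1\<close>-contraction, bounded convergence in probability is
  \<open>L\<^sup>1\<close>-convergence, and a product of factors in \<open>[0,1]\<close> moves by at most the sum of the
  movements of its factors; so, with strong convergence of \<open>C\<^sub>n\<close>, both sides of that formula
  converge in \<open>L\<^sup>1\<close> to the corresponding sides for the sets \<open>A\<^sub>j\<close> given \<open>C\<^sub>0\<close>, which
  therefore agree almost everywhere.\<close>

text \<open>Only meaningful for integrable differences: the Bochner integral of a non-integrable
  function is \<open>0\<close>, hence the integrability hypotheses below.\<close>

definition L1_conv :: "'a measure \<Rightarrow> (nat \<Rightarrow> 'a \<Rightarrow> real) \<Rightarrow> ('a \<Rightarrow> real) \<Rightarrow> bool" where
  "L1_conv M X Y \<longleftrightarrow> (\<lambda>n. \<integral>x. \<bar>X n x - Y x\<bar> \<partial>M) \<longlonglongrightarrow> 0"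

lemma space_sigma_subfield:
  assumes "sigma_subfield M G"
  shows "space (sigma (space M) G) = space M"
  using assms unfolding sigma_subfield_def by (simp add: sigma_algebra_iff2 space_measure_of_conv)

lemma sets_sigma_subfield:
  assumes "sigma_subfield M G"
  shows "sets (sigma (space M) G) = G"
  using assms unfolding sigma_subfield_def
  by (simp add: sigma_algebra.sigma_sets_eq sigma_algebra_iff2)

lemma cexp_measurable [measurable]: "cexp M G f \<in> borel_measurable M"
  unfolding cexp_def by simp

lemma cexp_level_set_in_subfield:
  assumes G: "sigma_subfield M G"
  shows "{x \<in> space M. c < cexp M G f x} \<in> G"
proof -
  have "cexp M G f \<in> borel_measurable (sigma (space M) G)"
    unfolding cexp_def by simp
  then have "{x \<in> space (sigma (space M) G). c < cexp M G f x} \<in> sets (sigma (space M) G)"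
    by measurable
  then show ?thesis
    using space_sigma_subfield[OF G] sets_sigma_subfield[OF G] by simp
qed

lemma indicator_INT_eq_prod:
  assumes "finite J"
  shows "indicator (\<Inter>j\<in>J. A j) x = (\<Prod>j\<in>J. indicator (A j) x :: real)"
  using assms by (induction J rule: finite_induct) (simp_all add: indicator_inter_arith)

lemma abs_prod_diff_le_sum:
  fixes a b :: "'j \<Rightarrow> real"
  assumes "finite J" and "\<forall>j\<in>J. 0 \<le> a j \<and> a j \<le> 1 \<and> 0 \<le> b j \<and> b j \<le> 1"
  shows "\<bar>(\<Prod>j\<in>J. a j) - (\<Prod>j\<in>J. b j)\<bar> \<le> (\<Sum>j\<in>J. \<bar>a j - b j\<bar>)"
  using assms
proof (induction J rule: finite_induct)
  case empty
  then show ?case by simp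
next
  case (insert i J)
  let ?P = "\<Prod>j\<in>J. a j" and ?Q = "\<Prod>j\<in>J. b j"
  have P: "0 \<le> ?P" "?P \<le> 1" using insert.prems by (auto intro: prod_nonneg prod_le_1)
  have ab: "0 \<le> a i" "a i \<le> 1" "0 \<le> b i" "b i \<le> 1" using insert.prems by auto
  have "a i * ?P - b i * ?Q = (a i - b i) * ?P + b i * (?P - ?Q)" by (simp add: algebra_simps)
  then have "\<bar>a i * ?P - b i * ?Q\<bar> \<le> \<bar>a i - b i\<bar> * \<bar>?P\<bar> + \<bar>b i\<bar> * \<bar>?P - ?Q\<bar>"
    by (metis abs_mult abs_triangle_ineq)
  also have "\<dots> \<le> \<bar>a i - b i\<bar> + \<bar>?P - ?Q\<bar>"
    using P ab by (intro add_mono mult_left_le mult_left_le_one_le) auto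
  finally show ?case using insert by simp
qed

lemma integral_abs_diff_triangle:
  fixes f g h :: "'a \<Rightarrow> real"
  assumes "integrable M f" "integrable M g" "integrable M h"
  shows "(\<integral>x. \<bar>f x - h x\<bar> \<partial>M) \<le> (\<integral>x. \<bar>f x - g x\<bar> \<partial>M) + (\<integral>x. \<bar>g x - h x\<bar> \<partial>M)"
proof -
  have "(\<integral>x. \<bar>f x - h x\<bar> \<partial>M) \<le> (\<integral>x. \<bar>f x - g x\<bar> + \<bar>g x - h x\<bar> \<partial>M)"
    using assms by (intro integral_mono) auto
  also have "\<dots> = (\<integral>x. \<bar>f x - g x\<bar> \<partial>M) + (\<integral>x. \<bar>g x - h x\<bar> \<partial>M)"
    using assms by (intro Bochner_Integration.integral_add) auto
  finally show ?thesis .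
qed

lemma AE_eq_of_L1_conv:
  fixes X Y :: "nat \<Rightarrow> 'a \<Rightarrow> real"
  assumes int: "\<And>n. integrable M (X n)" "\<And>n. integrable M (Y n)" "integrable M f" "integrable M g"
    and X: "L1_conv M X f" and Y: "L1_conv M Y g"
    and eq: "eventually (\<lambda>n. AE x in M. X n x = Y n x) sequentially"
  shows "AE x in M. f x = g x"
proof -
  have "(\<integral>x. \<bar>f x - g x\<bar> \<partial>M) \<le> (\<integral>x. \<bar>X n x - f x\<bar> \<partial>M) + (\<integral>x. \<bar>Y n x - g x\<bar> \<partial>M)"
    if "AE x in M. X n x = Y n x" for n
  proof -
    have "AE x in M. \<bar>f x - g x\<bar> \<le> \<bar>X n x - f x\<bar> + \<bar>Y n x - g x\<bar>"
      using that by eventually_elim auto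
    then have "(\<integral>x. \<bar>f x - g x\<bar> \<partial>M) \<le> (\<integral>x. \<bar>X n x - f x\<bar> + \<bar>Y n x - g x\<bar> \<partial>M)"
      using int by (intro integral_mono_AE) auto
    also have "\<dots> = (\<integral>x. \<bar>X n x - f x\<bar> \<partial>M) + (\<integral>x. \<bar>Y n x - g x\<bar> \<partial>M)"
      using int by (intro Bochner_Integration.integral_add) auto
    finally show ?thesis .
  qed
  then have "eventually (\<lambda>n. (\<integral>x. \<bar>f x - g x\<bar> \<partial>M)
      \<le> (\<integral>x. \<bar>X n x - f x\<bar> \<partial>M) + (\<integral>x. \<bar>Y n x - g x\<bar> \<partial>M)) sequentially"
    using eq by (auto elim: eventually_mono)
  moreover have "(\<lambda>n. (\<integral>x. \<bar>X n x - f x\<bar> \<partial>M) + (\<integral>x. \<bar>Y n x - g x\<bar> \<partial>M)) \<longlonglongrightarrow> 0"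
    using X Y unfolding L1_conv_def by (rule tendsto_add_zero)
  ultimately have "(\<integral>x. \<bar>f x - g x\<bar> \<partial>M) \<le> 0"
    by (intro tendsto_le[OF trivial_limit_sequentially _ tendsto_const]) auto
  then have "(\<integral>x. \<bar>f x - g x\<bar> \<partial>M) = 0"
    by (simp add: antisym)
  then have "AE x in M. \<bar>f x - g x\<bar> = 0"
    using int by (subst integral_nonneg_eq_0_iff_AE[symmetric]) auto
  then show ?thesis by eventually_elim simp
qed

context finite_measure
begin

lemma sigma_finite_subalgebra_sigma_subfield:
  assumes G: "sigma_subfield M G"
  shows "sigma_finite_subalgebra M (sigma (space M) G)"
proof -
  have "subalgebra M (sigma (space M) G)"
    using G space_sigma_subfield[OF G] sets_sigma_subfield[OF G]
    unfolding subalgebra_def sigma_subfield_def by simp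
  then have "finite_measure_subalgebra M (sigma (space M) G)"
    by (intro finite_measure_subalgebra.intro finite_measure_subalgebra_axioms.intro
        finite_measure_axioms)
  then show ?thesis
    by (rule finite_measure_subalgebra_is_sigma_finite)
qed

lemma integrable_cexp:
  assumes "sigma_subfield M G" and "integrable M f"
  shows "integrable M (cexp M G f)"
  using sigma_finite_subalgebra.real_cond_exp_int(1)[OF sigma_finite_subalgebra_sigma_subfield]
    assms unfolding cexp_def by blast

lemma integrable_cexp_indicator:
  assumes "sigma_subfield M G" and "A \<in> sets M"
  shows "integrable M (cexp M G (indicator A))"
  using assms by (intro integrable_cexp integrable_real_indicator) (auto simp: less_top[symmetric])

lemma AE_cexp_indicator_bounds:
  assumes G: "sigma_subfield M G" and A: "A \<in> sets M"
  shows "AE x in M. 0 \<le> cexp M G (indicator A) x \<and> cexp M G (indicator A) x \<le> 1"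
proof -
  interpret sigma_finite_subalgebra M "sigma (space M) G"
    using G by (rule sigma_finite_subalgebra_sigma_subfield)
  have "integrable M (indicator A :: 'a \<Rightarrow> real)"
    using A by (intro integrable_real_indicator) (auto simp: less_top[symmetric])
  then have "AE x in M. 0 \<le> cexp M G (indicator A) x" "AE x in M. cexp M G (indicator A) x \<le> 1"
    using real_cond_exp_ge_c[of "indicator A" 0] real_cond_exp_le_c[of "indicator A" 1]
    unfolding cexp_def by (auto simp: indicator_def)
  then show ?thesis by eventually_elim simp
qed

lemma cexp_L1_contraction:
  assumes G: "sigma_subfield M G" and f: "integrable M f" and g: "integrable M g"
  shows "(\<integral>x. \<bar>cexp M G f x - cexp M G g x\<bar> \<partial>M) \<le> (\<integral>x. \<bar>f x - g x\<bar> \<partial>M)"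
proof -
  interpret sigma_finite_subalgebra M "sigma (space M) G"
    using G by (rule sigma_finite_subalgebra_sigma_subfield)
  let ?E = "real_cond_exp M (sigma (space M) G)"
  have d: "integrable M (\<lambda>x. f x - g x)" and ad: "integrable M (\<lambda>x. \<bar>f x - g x\<bar>)"
    and nd: "integrable M (\<lambda>x. - \<bar>f x - g x\<bar>)" using f g by auto
  have "AE x in M. ?E (\<lambda>x. f x - g x) x = ?E f x - ?E g x"
    using real_cond_exp_diff[OF f g] .
  moreover have "AE x in M. ?E (\<lambda>x. f x - g x) x \<le> ?E (\<lambda>x. \<bar>f x - g x\<bar>) x"
    by (rule real_cond_exp_mono[OF _ d ad]) auto
  moreover have "AE x in M. ?E (\<lambda>x. - \<bar>f x - g x\<bar>) x \<le> ?E (\<lambda>x. f x - g x) x"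
    by (rule real_cond_exp_mono[OF _ nd d]) auto
  moreover have "AE x in M. ?E (\<lambda>x. - \<bar>f x - g x\<bar>) x = - ?E (\<lambda>x. \<bar>f x - g x\<bar>) x"
    using real_cond_exp_cmult[OF ad, of "-1"] by simp
  ultimately have le: "AE x in M. \<bar>cexp M G f x - cexp M G g x\<bar> \<le> ?E (\<lambda>x. \<bar>f x - g x\<bar>) x"
    unfolding cexp_def by eventually_elim auto
  have "(\<integral>x. \<bar>cexp M G f x - cexp M G g x\<bar> \<partial>M) \<le> (\<integral>x. ?E (\<lambda>x. \<bar>f x - g x\<bar>) x \<partial>M)"
    using integrable_cexp[OF G f] integrable_cexp[OF G g] real_cond_exp_int(1)[OF ad] le
    by (intro integral_mono_AE) auto
  also have "\<dots> = (\<integral>x. \<bar>f x - g x\<bar> \<partial>M)"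
    using real_cond_exp_int(2)[OF ad] .
  finally show ?thesis .
qed

lemma L1_conv_prod:
  fixes f :: "nat \<Rightarrow> 'j \<Rightarrow> 'a \<Rightarrow> real" and g :: "'j \<Rightarrow> 'a \<Rightarrow> real"
  assumes J: "finite J"
    and "\<And>n j. j \<in> J \<Longrightarrow> f n j \<in> borel_measurable M"
      "\<And>j. j \<in> J \<Longrightarrow> g j \<in> borel_measurable M"
    and bounds: "\<And>n. AE x in M. \<forall>j\<in>J. 0 \<le> f n j x \<and> f n j x \<le> 1 \<and> 0 \<le> g j x \<and> g j x \<le> 1"
    and conv: "\<And>j. j \<in> J \<Longrightarrow> L1_conv M (\<lambda>n. f n j) (g j)"
  shows "L1_conv M (\<lambda>n x. \<Prod>j\<in>J. f n j x) (\<lambda>x. \<Prod>j\<in>J. g j x)"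
proof -
  have int: "integrable M (\<lambda>x. \<bar>f n j x - g j x\<bar>)" if j: "j \<in> J" for n j
  proof (rule integrable_const_bound[where B=2])
    show "AE x in M. norm \<bar>f n j x - g j x\<bar> \<le> 2"
      using bounds[of n] by eventually_elim (use j in auto)
    show "(\<lambda>x. \<bar>f n j x - g j x\<bar>) \<in> borel_measurable M"
      using j assms(2,3) by measurable
  qed
  have le: "(\<integral>x. \<bar>(\<Prod>j\<in>J. f n j x) - (\<Prod>j\<in>J. g j x)\<bar> \<partial>M) \<le> (\<Sum>j\<in>J. \<integral>x. \<bar>f n j x - g j x\<bar> \<partial>M)"
    for n
  proof -
    have sum: "integrable M (\<lambda>x. \<Sum>j\<in>J. \<bar>f n j x - g j x\<bar>)"
      by (intro Bochner_Integration.integrable_sum int)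
    have pw: "AE x in M. \<bar>(\<Prod>j\<in>J. f n j x) - (\<Prod>j\<in>J. g j x)\<bar> \<le> (\<Sum>j\<in>J. \<bar>f n j x - g j x\<bar>)"
      using bounds[of n] by eventually_elim (rule abs_prod_diff_le_sum[OF J])
    have "integrable M (\<lambda>x. \<bar>(\<Prod>j\<in>J. f n j x) - (\<Prod>j\<in>J. g j x)\<bar>)"
    proof (rule Bochner_Integration.integrable_bound[OF sum])
      show "(\<lambda>x. \<bar>(\<Prod>j\<in>J. f n j x) - (\<Prod>j\<in>J. g j x)\<bar>) \<in> borel_measurable M"
        using assms(2,3) by (intro borel_measurable_abs borel_measurable_diff borel_measurable_prod) auto
      show "AE x in M. norm \<bar>(\<Prod>j\<in>J. f n j x) - (\<Prod>j\<in>J. g j x)\<bar>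
          \<le> norm (\<Sum>j\<in>J. \<bar>f n j x - g j x\<bar>)"
        using pw by eventually_elim (simp add: sum_nonneg)
    qed
    then have "(\<integral>x. \<bar>(\<Prod>j\<in>J. f n j x) - (\<Prod>j\<in>J. g j x)\<bar> \<partial>M)
        \<le> (\<integral>x. (\<Sum>j\<in>J. \<bar>f n j x - g j x\<bar>) \<partial>M)"
      using sum pw by (rule integral_mono_AE)
    also have "\<dots> = (\<Sum>j\<in>J. \<integral>x. \<bar>f n j x - g j x\<bar> \<partial>M)"
      using int by (intro Bochner_Integration.integral_sum) auto
    finally show ?thesis .
  qed
  have lim: "(\<lambda>n. \<Sum>j\<in>J. \<integral>x. \<bar>f n j x - g j x\<bar> \<partial>M) \<longlonglongrightarrow> 0"
    using conv unfolding L1_conv_def by (rule tendsto_null_sum)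
  show ?thesis
    unfolding L1_conv_def
    by (rule tendsto_sandwich[OF always_eventually always_eventually tendsto_const lim])
      (simp_all add: le)
qed

lemma integrable_prod_cexp_indicator:
  assumes G: "sigma_subfield M G" and J: "finite J" and A: "\<And>j. j \<in> J \<Longrightarrow> A j \<in> sets M"
  shows "integrable M (\<lambda>x. \<Prod>j\<in>J. cexp M G (indicator (A j)) x)"
proof (rule integrable_const_bound[where B=1])
  have "AE x in M. \<forall>j\<in>J. 0 \<le> cexp M G (indicator (A j)) x \<and> cexp M G (indicator (A j)) x \<le> 1"
    using J A AE_cexp_indicator_bounds[OF G] by (intro AE_finite_allI) auto
  then show "AE x in M. norm (\<Prod>j\<in>J. cexp M G (indicator (A j)) x) \<le> 1"
    by eventually_elim (simp add: prod_nonneg prod_le_1)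
qed simp

end

context prob_space
begin

lemma conv_in_prob_imp_L1_conv:
  assumes [measurable]: "\<And>n. X n \<in> borel_measurable M" "Y \<in> borel_measurable M"
    and bound: "\<And>n. AE x in M. \<bar>X n x - Y x\<bar> \<le> K"
    and conv: "conv_in_prob M X Y"
  shows "L1_conv M X Y"
proof -
  have split: "(\<integral>x. \<bar>X n x - Y x\<bar> \<partial>M) \<le> e + K * prob {x \<in> space M. e < \<bar>X n x - Y x\<bar>}"
    if e: "e > 0" for e n
  proof -
    define S where "S = {x \<in> space M. e < \<bar>X n x - Y x\<bar>}"
    have [measurable]: "S \<in> sets M" unfolding S_def by measurable
    have "AE x in M. \<bar>X n x - Y x\<bar> \<le> e + K * indicator S x"
      using bound[of n] AE_space by eventually_elim (use e in \<open>auto simp: S_def indicator_def\<close>)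
    moreover have "integrable M (\<lambda>x. \<bar>X n x - Y x\<bar>)"
      using bound[of n] by (intro integrable_const_bound[where B=K]) auto
    moreover have "integrable M (\<lambda>x. e + K * indicator S x)"
      by (intro Bochner_Integration.integrable_add integrable_mult_right integrable_real_indicator)
        (auto simp: less_top[symmetric])
    ultimately have "(\<integral>x. \<bar>X n x - Y x\<bar> \<partial>M) \<le> (\<integral>x. e + K * indicator S x \<partial>M)"
      by (intro integral_mono_AE)
    also have "\<dots> = e + K * prob S"
      by (subst Bochner_Integration.integral_add) (auto simp: less_top[symmetric] prob_space)
    finally show ?thesis unfolding S_def .
  qed
  show ?thesis
    unfolding L1_conv_def
  proof (rule tendstoI)
    fix r :: real
    assume r: "r > 0"
    have "(\<lambda>n. K * prob {x \<in> space M. r/2 < \<bar>X n x - Y x\<bar>}) \<longlonglongrightarrow> 0"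
      using conv[unfolded conv_in_prob_def, rule_format, of "r/2"] r by (intro tendsto_mult_right_zero) auto
    then have "eventually (\<lambda>n. K * prob {x \<in> space M. r/2 < \<bar>X n x - Y x\<bar>} < r/2) sequentially"
      using r by (intro order_tendstoD(2)) auto
    then show "eventually (\<lambda>n. dist (\<integral>x. \<bar>X n x - Y x\<bar> \<partial>M) 0 < r) sequentially"
    proof eventually_elim
      case (elim n)
      have "0 \<le> (\<integral>x. \<bar>X n x - Y x\<bar> \<partial>M)" by simp
      then show ?case using split[of "r/2" n] elim r by simp
    qed
  qed
qed

lemma L1_conv_indicator_level_set:
  assumes [measurable]: "\<And>n. X n \<in> borel_measurable M" "A \<in> sets M"
    and conv: "conv_in_prob M X (indicator A)"
  shows "L1_conv M (\<lambda>n. indicator {x \<in> space M. 1/2 < X n x}) (indicator A)"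
proof -
  define T where "T n = {x \<in> space M. 1/4 < \<bar>X n x - indicator A x\<bar>}" for n
  have [measurable]: "T n \<in> sets M" for n unfolding T_def by measurable
  have le: "(\<integral>x. \<bar>indicator {x \<in> space M. 1/2 < X n x} x - indicator A x\<bar> \<partial>M) \<le> prob (T n)"
    for n
  proof -
    have "(\<integral>x. \<bar>indicator {x \<in> space M. 1/2 < X n x} x - indicator A x\<bar> \<partial>M)
        \<le> (\<integral>x. (indicator (T n) x :: real) \<partial>M)"
    proof (rule Bochner_Integration.integral_mono)
      show "integrable M (\<lambda>x. \<bar>indicator {x \<in> space M. 1/2 < X n x} x - indicator A x :: real\<bar>)"
        by (intro integrable_abs integrable_diff integrable_real_indicator)
          (auto simp: less_top[symmetric])
      show "integrable M (indicator (T n) :: 'a \<Rightarrow> real)"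
        by (intro integrable_real_indicator) (auto simp: less_top[symmetric])
    qed (auto simp: T_def indicator_def abs_if split: if_splits)
    then show ?thesis by (simp add: T_def)
  qed
  have lim: "(\<lambda>n. prob (T n)) \<longlonglongrightarrow> 0"
    using conv[unfolded conv_in_prob_def, rule_format, of "1/4"] unfolding T_def by simp
  show ?thesis
    unfolding L1_conv_def
    by (rule tendsto_sandwich[OF always_eventually always_eventually tendsto_const lim])
      (simp, intro allI le)
qed

lemma cexp_L1_conv:
  assumes C: "\<And>n. sigma_subfield M (C n)" and D: "sigma_subfield M D"
    and A: "A \<in> sets M" and S: "\<And>n. S n \<in> sets M"
    and strong: "conv_in_prob M (\<lambda>n. cexp M (C n) (indicator A)) (cexp M D (indicator A))"
    and approx: "L1_conv M (\<lambda>n. indicator (S n)) (indicator A)"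
  shows "L1_conv M (\<lambda>n. cexp M (C n) (indicator (S n))) (cexp M D (indicator A))"
proof -
  have strong_L1: "L1_conv M (\<lambda>n. cexp M (C n) (indicator A)) (cexp M D (indicator A))"
  proof (rule conv_in_prob_imp_L1_conv[OF _ _ _ strong])
    show "AE x in M. \<bar>cexp M (C n) (indicator A) x - cexp M D (indicator A) x\<bar> \<le> 2" for n
      using AE_cexp_indicator_bounds[OF C[of n] A] AE_cexp_indicator_bounds[OF D A]
      by eventually_elim auto
  qed auto
  have le: "(\<integral>x. \<bar>cexp M (C n) (indicator (S n)) x - cexp M D (indicator A) x\<bar> \<partial>M)
      \<le> (\<integral>x. \<bar>indicator (S n) x - indicator A x\<bar> \<partial>M)
        + (\<integral>x. \<bar>cexp M (C n) (indicator A) x - cexp M D (indicator A) x\<bar> \<partial>M)" for n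
  proof -
    have ind: "integrable M (indicator X :: 'a \<Rightarrow> real)" if "X \<in> sets M" for X
      using that by (intro integrable_real_indicator) (auto simp: less_top[symmetric])
    have "(\<integral>x. \<bar>cexp M (C n) (indicator (S n)) x - cexp M D (indicator A) x\<bar> \<partial>M)
        \<le> (\<integral>x. \<bar>cexp M (C n) (indicator (S n)) x - cexp M (C n) (indicator A) x\<bar> \<partial>M)
          + (\<integral>x. \<bar>cexp M (C n) (indicator A) x - cexp M D (indicator A) x\<bar> \<partial>M)"
      using C D A S by (intro integral_abs_diff_triangle integrable_cexp_indicator)
    moreover have "(\<integral>x. \<bar>cexp M (C n) (indicator (S n)) x - cexp M (C n) (indicator A) x\<bar> \<partial>M)
        \<le> (\<integral>x. \<bar>indicator (S n) x - indicator A x\<bar> \<partial>M)"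
      using C A S by (intro cexp_L1_contraction ind)
    ultimately show ?thesis by linarith
  qed
  have lim: "(\<lambda>n. (\<integral>x. \<bar>indicator (S n) x - indicator A x\<bar> \<partial>M)
      + (\<integral>x. \<bar>cexp M (C n) (indicator A) x - cexp M D (indicator A) x\<bar> \<partial>M)) \<longlonglongrightarrow> 0"
    using approx strong_L1 unfolding L1_conv_def by (rule tendsto_add_zero)
  show ?thesis
    unfolding L1_conv_def
    by (rule tendsto_sandwich[OF always_eventually always_eventually tendsto_const lim])
      (simp, intro allI le)
qed

lemma AE_cexp_INT_eq_prod_limit:
  assumes C: "\<And>n. sigma_subfield M (C n)" and D: "sigma_subfield M D"
    and strong: "\<And>X. X \<in> sets M \<Longrightarrow>
      conv_in_prob M (\<lambda>n. cexp M (C n) (indicator X)) (cexp M D (indicator X))"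
    and J: "finite J" "J \<noteq> {}"
    and A: "\<And>j. j \<in> J \<Longrightarrow> A j \<in> sets M" and S: "\<And>n j. j \<in> J \<Longrightarrow> S n j \<in> sets M"
    and approx: "\<And>j. j \<in> J \<Longrightarrow> L1_conv M (\<lambda>n. indicator (S n j)) (indicator (A j))"
    and indep: "eventually (\<lambda>n. AE x in M. cexp M (C n) (indicator (\<Inter>j\<in>J. S n j)) x
      = (\<Prod>j\<in>J. cexp M (C n) (indicator (S n j)) x)) sequentially"
  shows "AE x in M. cexp M D (indicator (\<Inter>j\<in>J. A j)) x = (\<Prod>j\<in>J. cexp M D (indicator (A j)) x)"
proof -
  have AI: "(\<Inter>j\<in>J. A j) \<in> sets M" and SI: "(\<Inter>j\<in>J. S n j) \<in> sets M" for n
    using J A S by auto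
  show ?thesis
  proof (rule AE_eq_of_L1_conv[OF _ _ _ _ _ _ indep])
    have "L1_conv M (\<lambda>n x. \<Prod>j\<in>J. indicator (S n j) x) (\<lambda>x. \<Prod>j\<in>J. indicator (A j) x)"
    proof (rule L1_conv_prod[OF J(1)])
      show "AE x in M. \<forall>j\<in>J. 0 \<le> (indicator (S n j) x :: real) \<and> indicator (S n j) x \<le> (1::real)
          \<and> 0 \<le> (indicator (A j) x :: real) \<and> indicator (A j) x \<le> (1::real)" for n
        by (intro AE_I2) (simp add: indicator_def)
    qed (use A S approx in auto)
    then have "L1_conv M (\<lambda>n. indicator (\<Inter>j\<in>J. S n j)) (indicator (\<Inter>j\<in>J. A j))"
      by (simp add: L1_conv_def indicator_INT_eq_prod[OF J(1)])
    then show "L1_conv M (\<lambda>n. cexp M (C n) (indicator (\<Inter>j\<in>J. S n j)))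
        (cexp M D (indicator (\<Inter>j\<in>J. A j)))"
      by (rule cexp_L1_conv[OF C D AI SI strong[OF AI]])
    show "L1_conv M (\<lambda>n x. \<Prod>j\<in>J. cexp M (C n) (indicator (S n j)) x)
        (\<lambda>x. \<Prod>j\<in>J. cexp M D (indicator (A j)) x)"
    proof (rule L1_conv_prod[OF J(1)])
      show "AE x in M. \<forall>j\<in>J. 0 \<le> cexp M (C n) (indicator (S n j)) x
          \<and> cexp M (C n) (indicator (S n j)) x \<le> 1
          \<and> 0 \<le> cexp M D (indicator (A j)) x \<and> cexp M D (indicator (A j)) x \<le> 1" for n
        using A S AE_cexp_indicator_bounds[OF C] AE_cexp_indicator_bounds[OF D] J(1)
        by (intro AE_finite_allI) (auto intro: AE_conjI)
      show "L1_conv M (\<lambda>n. cexp M (C n) (indicator (S n j))) (cexp M D (indicator (A j)))"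
        if "j \<in> J" for j
        using that A S approx strong by (intro cexp_L1_conv[OF C D]) auto
    qed auto
  qed (use C D AI SI A S J in \<open>auto intro: integrable_cexp_indicator integrable_prod_cexp_indicator\<close>)
qed

end

theorem proposition3p1:
  fixes M :: "'a measure" and C :: "nat \<Rightarrow> 'a set set"
    and B :: "nat \<Rightarrow> 'i \<Rightarrow> 'a set set" and I :: "'i set"
  assumes "prob_space M"
    and "\<forall>n. sigma_subfield M (C n)"
    and "\<forall>n. \<forall>i\<in>I. sigma_subfield M (B n i)"
    and "sf_strong_conv M C (C 0)"
    and "\<forall>i\<in>I. sf_weak_conv M (\<lambda>n. B n i) (B 0 i)"
    and "\<forall>n\<ge>1. cond_indep M (C n) (\<lambda>i. B n i) I"
  shows "cond_indep M (C 0) (\<lambda>i. B 0 i) I"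
  unfolding cond_indep_def
proof (intro allI impI, elim conjE)
  interpret prob_space M by fact
  fix J and A :: "'i \<Rightarrow> 'a set"
  assume J: "finite J" "J \<noteq> {}" "J \<subseteq> I" and A: "\<forall>j\<in>J. A j \<in> B 0 j"
  have B: "sigma_subfield M (B n j)" if "j \<in> J" for n j
    using assms(3) J(3) that by auto
  then have A_M: "A j \<in> sets M" if "j \<in> J" for j
    using A that unfolding sigma_subfield_def by blast
  define S where "S n j = {x \<in> space M. 1/2 < cexp M (B n j) (indicator (A j)) x}" for n j
  have S_B: "S n j \<in> B n j" if "j \<in> J" for n j
    unfolding S_def using B[OF that] by (rule cexp_level_set_in_subfield)
  then have S_M: "S n j \<in> sets M" if "j \<in> J" for n j
    using B[OF that] that unfolding sigma_subfield_def by blast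
  show "AE x in M. cexp M (C 0) (indicator (\<Inter>j\<in>J. A j)) x
      = (\<Prod>j\<in>J. cexp M (C 0) (indicator (A j)) x)"
  proof (rule AE_cexp_INT_eq_prod_limit[where S = S])
    show "L1_conv M (\<lambda>n. indicator (S n j)) (indicator (A j))" if "j \<in> J" for j
      unfolding S_def using assms(5) J(3) A A_M that
      by (intro L1_conv_indicator_level_set) (auto simp: sf_weak_conv_def)
    show "eventually (\<lambda>n. AE x in M. cexp M (C n) (indicator (\<Inter>j\<in>J. S n j)) x
        = (\<Prod>j\<in>J. cexp M (C n) (indicator (S n j)) x)) sequentially"
      using assms(6) J S_B unfolding cond_indep_def eventually_sequentially by blast
  qed (use assms(2,4) J A_M S_M in \<open>auto simp: sf_strong_conv_def\<close>)
qed

end
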